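(* The number of cyclic parking functions of length $n$ is $|\mathrm{CycPF}_n|=\sum_{i=0}^{n-1} i!\,(n-i)!$.
   Context: A parking preference is $p\in[n]^n$. Classical parking process: cars $1,\dots,n$ enter in order into spots $1,\dots,n$, initially unoccupied; car $i$ parks in the first unoccupied spot $k\ge p_i$ and fails if none. A classical parking function is a $p$ for which all cars park; its outcome is the permutation $\pi$ (one-line notation) with $\pi_k$ the car in spot $k$. For $i\in[n]$, $\mathrm{Inc}_i^n:=i(i+1)\cdots n\,12\cdots(i-1)$. A cyclic parking function is a classical parking function whose outcome equals $\mathrm{Inc}_i^n$ for some $i\in[n]$; $\mathrm{CycPF}_n$ is the set of these. *)

theory Defs
  imports Main
begin

text \<open>Spots and cars are numbered 1..n. A parking preference of length n is a list p
  with length n and entries in {1..n}; car i (1-based) has preference p ! (i-1).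
  The state of the lot is a map from spots to the car parked there (if any).\<close>

definition first_free :: "nat \<Rightarrow> (nat \<Rightarrow> nat option) \<Rightarrow> nat \<Rightarrow> nat option" where
  "first_free n occ a =
     (if \<exists>k. a \<le> k \<and> k \<le> n \<and> occ k = None
      then Some (LEAST k. a \<le> k \<and> k \<le> n \<and> occ k = None) else None)"

fun park_from :: "nat \<Rightarrow> nat \<Rightarrow> (nat \<Rightarrow> nat option) \<Rightarrow> nat list \<Rightarrow> (nat \<Rightarrow> nat option) option" where
  "park_from n i occ [] = Some occ"
| "park_from n i occ (a # ps) =
     (case first_free n occ a of
        None \<Rightarrow> None
      | Some k \<Rightarrow> park_from n (Suc i) (occ(k \<mapsto> i)) ps)"

definition park :: "nat \<Rightarrow> nat list \<Rightarrow> (nat \<Rightarrow> nat option) option" where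
  "park n p = park_from n 1 (\<lambda>_. None) p"

definition parking_preferences :: "nat \<Rightarrow> nat list set" where
  "parking_preferences n = {p. length p = n \<and> set p \<subseteq> {1..n}}"

definition is_parking_function :: "nat \<Rightarrow> nat list \<Rightarrow> bool" where
  "is_parking_function n p \<longleftrightarrow> p \<in> parking_preferences n \<and> park n p \<noteq> None"

text \<open>Outcome in one-line notation: the k-th entry is the car in spot k.\<close>
definition outcome :: "nat \<Rightarrow> nat list \<Rightarrow> nat list" where
  "outcome n p = map (\<lambda>k. the (the (park n p) k)) [1..<Suc n]"

definition Inc :: "nat \<Rightarrow> nat \<Rightarrow> nat list" where
  "Inc n i = [i..<Suc n] @ [1..<i]"

definition CycPF :: "nat \<Rightarrow> nat list set" where
  "CycPF n = {p. is_parking_function n p \<and> (\<exists>i\<in>{1..n}. outcome n p = Inc n i)}"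

end

theory Submission
  imports Defs
begin

text \<open>Fix the outcome \<open>Inc_i\<close>. Then car \<open>j\<close> must park in the spot that \<open>Inc_i\<close> assigns to it,
  and by induction the cars before it occupy exactly their assigned spots; so the admissible
  preferences of car \<open>j\<close> are those whose first free spot is the assigned one. They form an
  interval ending at that spot, of length \<open>j\<close> if \<open>j < i\<close> and \<open>j - i + 1\<close> otherwise, and they
  are chosen independently. Hence \<open>(i - 1)! (n - i + 1)!\<close> parking functions have outcome
  \<open>Inc_i\<close>, and summing over \<open>i\<close> gives the formula.\<close>

lemma first_free_eq_Some_iff:
  "first_free n occ a = Some s \<longleftrightarrow>
     a \<le> s \<and> s \<le> n \<and> occ s = None \<and> (\<forall>k. a \<le> k \<and> k < s \<longrightarrow> occ k \<noteq> None)"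
proof
  assume "first_free n occ a = Some s"
  then have ex: "\<exists>k. a \<le> k \<and> k \<le> n \<and> occ k = None"
    and s: "s = (LEAST k. a \<le> k \<and> k \<le> n \<and> occ k = None)"
    by (auto simp: first_free_def split: if_splits)
  then show "a \<le> s \<and> s \<le> n \<and> occ s = None \<and> (\<forall>k. a \<le> k \<and> k < s \<longrightarrow> occ k \<noteq> None)"
    using LeastI_ex[OF ex] not_less_Least[of _ "\<lambda>k. a \<le> k \<and> k \<le> n \<and> occ k = None"]
    by (metis dual_order.trans less_imp_le)
next
  assume h: "a \<le> s \<and> s \<le> n \<and> occ s = None \<and> (\<forall>k. a \<le> k \<and> k < s \<longrightarrow> occ k \<noteq> None)"
  then have "(LEAST k. a \<le> k \<and> k \<le> n \<and> occ k = None) = s"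
    by (intro Least_equality) (auto simp: not_less[symmetric])
  with h show "first_free n occ a = Some s"
    unfolding first_free_def by auto
qed

lemma first_free_preimage_eq_atLeastAtMost:
  assumes "1 \<le> b" "b \<le> s" "s \<le> n" "occ s = None"
    and "\<forall>k. b \<le> k \<and> k < s \<longrightarrow> occ k \<noteq> None"
    and boundary: "b = 1 \<or> occ (b - 1) = None"
  shows "{a \<in> {1..n}. first_free n occ a = Some s} = {b..s}"
proof (intro set_eqI iffI)
  fix a assume a: "a \<in> {a \<in> {1..n}. first_free n occ a = Some s}"
  have "b \<le> a"
  proof (rule ccontr)
    assume "\<not> b \<le> a"
    with a boundary have "a \<le> b - 1" "b - 1 < s" "occ (b - 1) = None"
      using assms(2) by auto
    with a show False
      by (auto simp: first_free_eq_Some_iff)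
  qed
  with a show "a \<in> {b..s}"
    by (simp add: first_free_eq_Some_iff)
qed (use assms in \<open>auto simp: first_free_eq_Some_iff\<close>)

lemma park_from_keeps_occupied:
  "park_from n i occ ps = Some occ' \<Longrightarrow> occ k = Some c \<Longrightarrow> occ' k = Some c"
proof (induction ps arbitrary: i occ)
  case (Cons a ps)
  then obtain s where "first_free n occ a = Some s"
    and "park_from n (Suc i) (occ(s \<mapsto> i)) ps = Some occ'"
    by (auto split: option.splits)
  with Cons show ?case
    by (metis first_free_eq_Some_iff fun_upd_other option.distinct(1))
qed simp

lemma card_lists_nth_in:
  "card {xs. length xs = n \<and> (\<forall>t<n. xs ! t \<in> B t)} = (\<Prod>t<n. card (B t))"
proof (induction n arbitrary: B)
  case (Suc n)
  have "{xs. length xs = Suc n \<and> (\<forall>t<Suc n. xs ! t \<in> B t)} =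
      (\<lambda>(x, xs). x # xs) ` (B 0 \<times> {xs. length xs = n \<and> (\<forall>t<n. xs ! t \<in> B (Suc t))})"
    by (auto simp: length_Suc_conv All_less_Suc2)
  moreover have "inj_on (\<lambda>(x, xs). x # xs) A" for A :: "('a \<times> 'a list) set"
    by (auto simp: inj_on_def)
  ultimately show ?case
    by (simp add: card_image card_cartesian_product Suc.IH prod.lessThan_Suc_shift
        del: prod.lessThan_Suc)
qed simp

text \<open>\<open>car_at k\<close> is the car in spot \<open>k\<close> of a prescribed final arrangement and \<open>spot_of\<close> its
  inverse; \<open>lot j\<close> is the lot just before car \<open>j\<close> enters, all earlier cars having parked
  where the arrangement puts them.\<close>

locale arrangement =
  fixes n :: nat and car_at spot_of :: "nat \<Rightarrow> nat"
  assumes car_at: "k \<in> {1..n} \<Longrightarrow> car_at k \<in> {1..n}"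
    and spot_of_car_at: "k \<in> {1..n} \<Longrightarrow> spot_of (car_at k) = k"
    and spot_of: "c \<in> {1..n} \<Longrightarrow> spot_of c \<in> {1..n}"
    and car_at_spot_of: "c \<in> {1..n} \<Longrightarrow> car_at (spot_of c) = c"
begin

definition lot :: "nat \<Rightarrow> nat \<Rightarrow> nat option" where
  "lot j k = (if k \<in> {1..n} \<and> car_at k < j then Some (car_at k) else None)"

definition realised_by :: "(nat \<Rightarrow> nat option) \<Rightarrow> bool" where
  "realised_by occ \<longleftrightarrow> (\<forall>k\<in>{1..n}. the (occ k) = car_at k)"

definition preferences :: "nat \<Rightarrow> nat set" where
  "preferences j = {a \<in> {1..n}. first_free n (lot j) a = Some (spot_of j)}"

lemma lot_1: "lot 1 = Map.empty"
proof
  fix k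
  show "lot 1 k = None"
    using car_at[of k] by (auto simp: lot_def)
qed

lemma lot_Suc:
  assumes "j \<in> {1..n}"
  shows "lot (Suc j) = (lot j)(spot_of j \<mapsto> j)"
proof
  fix k
  show "lot (Suc j) k = ((lot j)(spot_of j \<mapsto> j)) k"
  proof (cases "k = spot_of j")
    case True
    then show ?thesis
      using assms spot_of car_at_spot_of by (simp add: lot_def)
  next
    case False
    then have "k \<in> {1..n} \<Longrightarrow> car_at k \<noteq> j"
      using spot_of_car_at by metis
    with False show ?thesis
      by (auto simp: lot_def)
  qed
qed

lemma realised_lot: "realised_by (lot (Suc n))"
  using car_at by (simp add: realised_by_def lot_def less_Suc_eq_le)

lemma park_from_lot_iff:
  assumes "1 \<le> j" "j + length ps = Suc n" "set ps \<subseteq> {1..n}"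
  shows "(\<exists>occ. park_from n j (lot j) ps = Some occ \<and> realised_by occ)
     \<longleftrightarrow> (\<forall>t<length ps. ps ! t \<in> preferences (j + t))"
  using assms
proof (induction ps arbitrary: j)
  case Nil
  then show ?case using realised_lot by simp
next
  case (Cons a ps)
  have j: "j \<in> {1..n}" and a: "a \<in> {1..n}"
    using Cons.prems by auto
  have "(\<exists>occ. park_from n j (lot j) (a # ps) = Some occ \<and> realised_by occ) \<longleftrightarrow>
      a \<in> preferences j \<and> (\<exists>occ. park_from n (Suc j) (lot (Suc j)) ps = Some occ \<and> realised_by occ)"
  proof
    assume "\<exists>occ. park_from n j (lot j) (a # ps) = Some occ \<and> realised_by occ"
    then obtain s occ where s: "first_free n (lot j) a = Some s"
      and occ: "park_from n (Suc j) ((lot j)(s \<mapsto> j)) ps = Some occ" and "realised_by occ"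
      by (auto split: option.splits)
    have "s \<in> {1..n}"
      using s a by (auto simp: first_free_eq_Some_iff)
    moreover have "occ s = Some j"
      using park_from_keeps_occupied[OF occ] by simp
    ultimately have "s = spot_of j"
      using \<open>realised_by occ\<close> spot_of_car_at by (force simp: realised_by_def)
    with s occ \<open>realised_by occ\<close> a lot_Suc[OF j]
    show "a \<in> preferences j \<and> (\<exists>occ. park_from n (Suc j) (lot (Suc j)) ps = Some occ \<and> realised_by occ)"
      by (auto simp: preferences_def)
  qed (simp add: preferences_def lot_Suc[OF j])
  with Cons.IH[of "Suc j"] Cons.prems show ?case
    by (simp add: All_less_Suc2)
qed

lemma park_realises_iff:
  assumes "p \<in> parking_preferences n"
  shows "park n p \<noteq> None \<and> realised_by (the (park n p)) \<longleftrightarrow> (\<forall>t<n. p ! t \<in> preferences (Suc t))"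
  using park_from_lot_iff[of 1 p] assms
  unfolding park_def lot_1 parking_preferences_def by auto

end

text \<open>The arrangement \<open>Inc_i\<close>: spots \<open>1..n-i+1\<close> hold cars \<open>i..n\<close>, the remaining spots cars
  \<open>1..i-1\<close>.\<close>

definition cyc_car :: "nat \<Rightarrow> nat \<Rightarrow> nat \<Rightarrow> nat" where
  "cyc_car n i k = (if k \<le> n - i + 1 then k + i - 1 else k - (n - i + 1))"

definition cyc_spot :: "nat \<Rightarrow> nat \<Rightarrow> nat \<Rightarrow> nat" where
  "cyc_spot n i c = (if i \<le> c then c - i + 1 else c + (n - i + 1))"

lemma arrangement_cyclic: "i \<in> {1..n} \<Longrightarrow> arrangement n (cyc_car n i) (cyc_spot n i)"
  by (unfold_locales; simp add: cyc_car_def cyc_spot_def; arith)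

lemma outcome_eq_Inc_iff:
  assumes i: "i \<in> {1..n}"
  shows "outcome n p = Inc n i \<longleftrightarrow> arrangement.realised_by n (cyc_car n i) (the (park n p))"
proof -
  have "Inc n i = map (cyc_car n i) [1..<Suc n]"
    by (rule nth_equalityI) (use i in \<open>auto simp: Inc_def cyc_car_def nth_append\<close>)
  then show ?thesis
    unfolding outcome_def arrangement.realised_by_def[OF arrangement_cyclic[OF i]] map_eq_conv
    by (simp del: upt_Suc add: atLeastLessThanSuc_atLeastAtMost)
qed

lemma card_cyclic_preferences:
  assumes i: "i \<in> {1..n}" and j: "j \<in> {1..n}"
  shows "card (arrangement.preferences n (cyc_car n i) (cyc_spot n i) j) =
    (if j < i then j else j - i + 1)"
proof -
  have cyc: "arrangement n (cyc_car n i) (cyc_spot n i)"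
    using i by (rule arrangement_cyclic)
  show ?thesis
  proof (cases "j < i")
    case True
    \<comment> \<open>cars \<open>1..j-1\<close> fill the spots from \<open>n - i + 2\<close> on, and spot \<open>n - i + 1\<close> awaits car \<open>n\<close>\<close>
    have "arrangement.preferences n (cyc_car n i) (cyc_spot n i) j = {n - i + 2 .. cyc_spot n i j}"
      unfolding arrangement.preferences_def[OF cyc]
      by (rule first_free_preimage_eq_atLeastAtMost)
        (use i j True in \<open>auto simp: arrangement.lot_def[OF cyc] cyc_car_def cyc_spot_def\<close>)
    with True i show ?thesis
      by (simp add: cyc_spot_def)
  next
    case False
    have "arrangement.preferences n (cyc_car n i) (cyc_spot n i) j = {1 .. cyc_spot n i j}"
      unfolding arrangement.preferences_def[OF cyc]
      by (rule first_free_preimage_eq_atLeastAtMost)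
        (use i j False in \<open>auto simp: arrangement.lot_def[OF cyc] cyc_car_def cyc_spot_def\<close>)
    with False show ?thesis
      by (simp add: cyc_spot_def)
  qed
qed

lemma prod_cyclic_preference_counts:
  assumes "1 \<le> i" "i - 1 \<le> m"
  shows "(\<Prod>t<m. if Suc t < i then Suc t else Suc t - i + 1) = fact (i - 1) * fact (Suc m - i)"
  using assms(2)
proof (induction m rule: dec_induct)
  case base
  have "(\<Prod>t<i - 1. if Suc t < i then Suc t else Suc t - i + 1) = (\<Prod>t<i - 1. Suc t)"
    by (rule prod.cong) auto
  then show ?case
    using assms(1) by (simp add: fact_prod_Suc atLeast0LessThan)
next
  case (step m)
  then have "Suc (Suc m) - i = Suc (Suc m - i)" "\<not> Suc m < i"
    using assms(1) by auto
  with step show ?case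
    by (simp add: algebra_simps)
qed

definition CycPF_at :: "nat \<Rightarrow> nat \<Rightarrow> nat list set" where
  "CycPF_at n i = {p. is_parking_function n p \<and> outcome n p = Inc n i}"

lemma CycPF_eq_UN_CycPF_at: "CycPF n = (\<Union>i\<in>{1..n}. CycPF_at n i)"
  by (auto simp: CycPF_def CycPF_at_def)

lemma hd_Inc: "i \<in> {1..n} \<Longrightarrow> hd (Inc n i) = i"
  by (simp add: Inc_def upt_conv_Cons del: upt_Suc)

lemma CycPF_at_disjoint:
  "i \<in> {1..n} \<Longrightarrow> i' \<in> {1..n} \<Longrightarrow> i \<noteq> i' \<Longrightarrow> CycPF_at n i \<inter> CycPF_at n i' = {}"
  by (auto simp: CycPF_at_def dest: arg_cong[where f = hd] simp: hd_Inc)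

lemma finite_CycPF_at: "finite (CycPF_at n i)"
proof (rule finite_subset)
  show "CycPF_at n i \<subseteq> {p. set p \<subseteq> {1..n} \<and> length p = n}"
    by (auto simp: CycPF_at_def is_parking_function_def parking_preferences_def)
qed (simp add: finite_lists_length_eq)

lemma CycPF_at_eq_lists:
  assumes i: "i \<in> {1..n}"
  shows "CycPF_at n i =
    {p. length p = n \<and> (\<forall>t<n. p ! t \<in> arrangement.preferences n (cyc_car n i) (cyc_spot n i) (Suc t))}"
    (is "_ = {p. length p = n \<and> ?prefs p}")
proof (intro set_eqI)
  fix p
  have cyc: "arrangement n (cyc_car n i) (cyc_spot n i)"
    using i by (rule arrangement_cyclic)
  have "p \<in> CycPF_at n i \<longleftrightarrow> p \<in> parking_preferences n \<and> park n p \<noteq> None \<and>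
      arrangement.realised_by n (cyc_car n i) (the (park n p))"
    by (simp add: CycPF_at_def is_parking_function_def outcome_eq_Inc_iff[OF i])
  also have "\<dots> \<longleftrightarrow> p \<in> parking_preferences n \<and> ?prefs p"
    using arrangement.park_realises_iff[OF cyc] by blast
  also have "\<dots> \<longleftrightarrow> length p = n \<and> ?prefs p"
    by (auto simp: parking_preferences_def arrangement.preferences_def[OF cyc] in_set_conv_nth)
  finally show "p \<in> CycPF_at n i \<longleftrightarrow> p \<in> {p. length p = n \<and> ?prefs p}"
    by simp
qed

lemma card_CycPF_at:
  assumes i: "i \<in> {1..n}"
  shows "card (CycPF_at n i) = fact (i - 1) * fact (Suc n - i)"
proof -
  have "card (CycPF_at n i) =
      (\<Prod>t<n. card (arrangement.preferences n (cyc_car n i) (cyc_spot n i) (Suc t)))"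
    unfolding CycPF_at_eq_lists[OF i] by (rule card_lists_nth_in)
  also have "\<dots> = (\<Prod>t<n. if Suc t < i then Suc t else Suc t - i + 1)"
    using i by (intro prod.cong) (simp_all add: card_cyclic_preferences)
  also have "\<dots> = fact (i - 1) * fact (Suc n - i)"
    using i by (intro prod_cyclic_preference_counts) auto
  finally show ?thesis .
qed

theorem corollary3p3:
  fixes n :: nat
  shows "card (CycPF n) = (\<Sum>i = 0..<n. fact i * fact (n - i))"
proof -
  have "card (CycPF n) = (\<Sum>i\<in>{1..n}. card (CycPF_at n i))"
    unfolding CycPF_eq_UN_CycPF_at
    by (rule card_UN_disjoint) (auto simp: finite_CycPF_at CycPF_at_disjoint)
  also have "\<dots> = (\<Sum>i\<in>{1..n}. fact (i - 1) * fact (Suc n - i))"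
    by (rule sum.cong) (simp_all add: card_CycPF_at)
  also have "\<dots> = (\<Sum>i = 0..<n. fact i * fact (n - i))"
    by (simp add: sum.atLeast1_atMost_eq atLeast0LessThan)
  finally show ?thesis .
qed

end
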